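(* Fix $\lambda>0$ and a positive integer $d$. Let $\phi$ be a message and $\Phi=\phi'$. Let $p,q$ be positive reals with $\frac1p+\frac1q=1$. Define $$S_{\phi,p}(x)=\left(\frac{e^{-x}}{\Phi(e^x-1)}\right)^p,\qquad \Xi_{\phi,q}(d,x)=d^{q-1}\left(\frac{\Phi(f_d(x))f_d(x)}{(1+x)\Phi(x)}\right)^q,$$ and $\xi_{\phi,q}(d)=\sup_{x\ge0}\Xi_{\phi,q}(d,x)$. If $S_{\phi,p}$ is concave on the non-negative reals, then for any two vectors $\vec x,\vec y\in\phi(\mathbb R^+)^d$, $$\left|f^\phi_d(\vec x)-f^\phi_d(\vec y)\right|^q\le\xi_{\phi,q}(d)\,\|\vec x-\vec y\|_q^q.$$
   Context: $f_d(R_1,\dots,R_d)=\lambda\prod_{i=1}^d\frac{1}{1+R_i}$, and the one-argument version is $f_d(x)=f_d(x,\dots,x)=\lambda/(1+x)^d$. A message is a strictly increasing, continuously differentiable function $\phi:(0,\infty)\to\mathbb R$ whose derivative is bounded away from $0$ on every interval $(0,M]$. With $\psi=\phi^{-1}$, $f^\phi_d(x_1,\dots,x_d)=\phi\big(f_d(\psi(x_1),\dots,\psi(x_d))\big)$. *)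

theory Defs
  imports "HOL-Analysis.Analysis"
begin

definition fd :: "real \<Rightarrow> nat \<Rightarrow> (nat \<Rightarrow> real) \<Rightarrow> real" where
  "fd lam d R = lam * (\<Prod>i<d. 1 / (1 + R i))"

definition fd1 :: "real \<Rightarrow> nat \<Rightarrow> real \<Rightarrow> real" where
  "fd1 lam d x = lam / (1 + x) ^ d"

definition message :: "(real \<Rightarrow> real) \<Rightarrow> bool" where
  "message \<phi> \<longleftrightarrow>
     strict_mono_on {0<..} \<phi> \<and>
     (\<forall>x>0. \<phi> differentiable (at x)) \<and>
     continuous_on {0<..} (deriv \<phi>) \<and>
     (\<forall>M>0. \<exists>c>0. \<forall>x\<in>{0<..M}. c \<le> deriv \<phi> x)"

definition fphi :: "(real \<Rightarrow> real) \<Rightarrow> real \<Rightarrow> nat \<Rightarrow> (nat \<Rightarrow> real) \<Rightarrow> real" where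
  "fphi \<phi> lam d x = \<phi> (fd lam d (\<lambda>i. inv_into {0<..} \<phi> (x i)))"

definition S_fun :: "(real \<Rightarrow> real) \<Rightarrow> real \<Rightarrow> real \<Rightarrow> real" where
  "S_fun \<phi> p x = (exp (- x) / deriv \<phi> (exp x - 1)) powr p"

definition Xi_fun :: "(real \<Rightarrow> real) \<Rightarrow> real \<Rightarrow> real \<Rightarrow> nat \<Rightarrow> real \<Rightarrow> real" where
  "Xi_fun \<phi> lam q d x =
     real d powr (q - 1) *
     (deriv \<phi> (fd1 lam d x) * fd1 lam d x / ((1 + x) * deriv \<phi> x)) powr q"

text \<open>xi = sup over x of Xi, taken in the extended reals (may be +oo).\<close>
definition xi_fun :: "(real \<Rightarrow> real) \<Rightarrow> real \<Rightarrow> real \<Rightarrow> nat \<Rightarrow> ereal" where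
  "xi_fun \<phi> lam q d = (SUP x\<in>{0<..}. ereal (Xi_fun \<phi> lam q d x))"

end

theory Submission
  imports Defs
begin

text \<open>In the coordinates \<open>t = ln (1 + \<psi> z)\<close> the map \<open>f\<^sup>\<phi>\<^sub>d\<close> becomes
  \<open>\<phi> (\<lambda> exp (- \<Sum>i. t i))\<close>. By the mean value theorem along the segment from \<open>y\<close>
  to \<open>x\<close>, the difference of \<open>f\<^sup>\<phi>\<^sub>d\<close> is \<open>\<Phi>(F) F \<Sum>i. a i (x i - y i)\<close> at an
  intermediate point, with \<open>a i = 1 / ((1 + \<psi> z i) \<Phi>(\<psi> z i))\<close>. Hoelder's inequality
  bounds this sum by \<open>(\<Sum>i. a i ^ p)\<^sup>1\<^sup>/\<^sup>p\<close> times the \<open>q\<close>-norm of \<open>x - y\<close>, and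
  \<open>a i ^ p = S\<^sub>\<phi>\<^sub>,\<^sub>p(t i)\<close>, so concavity of \<open>S\<^sub>\<phi>\<^sub>,\<^sub>p\<close> (Jensen) replaces all \<open>t i\<close>
  by their mean \<open>ln (1 + x\<^sub>0)\<close>. At that point \<open>F = f\<^sub>d(x\<^sub>0)\<close>, and the bound obtained is
  exactly \<open>\<Xi>\<^sub>\<phi>\<^sub>,\<^sub>q(d, x\<^sub>0)\<close> times the \<open>q\<close>-th power of the \<open>q\<close>-norm.\<close>

lemma conjugate_exponents_gt_1:
  fixes p q :: real
  assumes "p > 0" "q > 0" "1 / p + 1 / q = 1"
  shows "p > 1" "q > 1"
proof -
  have "1 / p > 0" "1 / q > 0" using assms by simp_all
  then have "1 / p < 1" "1 / q < 1" using assms by linarith+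
  then show "p > 1" "q > 1" using assms by (auto simp: divide_less_eq)
qed

lemma Holder_inequality_sum:
  fixes a b :: "'a \<Rightarrow> real" and p q :: real
  assumes I: "finite I"
    and a: "\<And>i. i \<in> I \<Longrightarrow> a i \<ge> 0" and b: "\<And>i. i \<in> I \<Longrightarrow> b i \<ge> 0"
    and pq: "p > 1" "q > 1" "1 / p + 1 / q = 1"
  shows "(\<Sum>i\<in>I. a i * b i)
           \<le> (\<Sum>i\<in>I. a i powr p) powr (1 / p) * (\<Sum>i\<in>I. b i powr q) powr (1 / q)"
proof (cases "(\<Sum>i\<in>I. a i powr p) = 0 \<or> (\<Sum>i\<in>I. b i powr q) = 0")
  case True
  then have "(\<forall>i\<in>I. a i = 0) \<or> (\<forall>i\<in>I. b i = 0)"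
    using I by (auto simp: sum_nonneg_eq_0_iff)
  then show ?thesis by auto
next
  case False
  define A where "A = (\<Sum>i\<in>I. a i powr p)"
  define B where "B = (\<Sum>i\<in>I. b i powr q)"
  have "A > 0" "B > 0"
    using False unfolding A_def B_def by (metis order_le_less powr_ge_zero sum_nonneg)+
  define A' where "A' = A powr (1 / p)"
  define B' where "B' = B powr (1 / q)"
  have A': "A' > 0" "A' powr p = A" using \<open>A > 0\<close> pq unfolding A'_def by (auto simp: powr_powr)
  have B': "B' > 0" "B' powr q = B" using \<open>B > 0\<close> pq unfolding B'_def by (auto simp: powr_powr)
  have "(\<Sum>i\<in>I. (a i / A') * (b i / B')) \<le> (\<Sum>i\<in>I. (a i / A') powr p / p + (b i / B') powr q / q)"
    by (rule sum_mono, rule Youngs_inequality) (use pq a b A' B' in auto)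
  also have "\<dots> = (\<Sum>i\<in>I. a i powr p) / A / p + (\<Sum>i\<in>I. b i powr q) / B / q"
    using A' B' a b by (simp add: powr_divide sum.distrib sum_divide_distrib)
  also have "\<dots> = 1"
    using \<open>A > 0\<close> \<open>B > 0\<close> pq unfolding A_def[symmetric] B_def[symmetric] by simp
  finally have "(\<Sum>i\<in>I. a i * b i) / (A' * B') \<le> 1"
    by (simp add: sum_divide_distrib[symmetric] mult.commute mult.left_commute)
  then show ?thesis using A' B' unfolding A'_def B'_def A_def B_def by (simp add: divide_le_eq)
qed

lemma concave_on_sum_le_card_mean:
  fixes f :: "real \<Rightarrow> real" and t :: "'a \<Rightarrow> real"
  assumes "concave_on C f" "finite I" "I \<noteq> {}" "\<And>i. i \<in> I \<Longrightarrow> t i \<in> C"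
  shows "(\<Sum>i\<in>I. f (t i)) \<le> card I * f ((\<Sum>i\<in>I. t i) / card I)"
proof -
  have card: "real (card I) > 0" using assms by auto
  have "(\<Sum>i\<in>I. (1 / card I) * f (t i)) \<le> f (\<Sum>i\<in>I. (1 / card I) *\<^sub>R t i)"
    by (rule concave_on_sum) (use assms in auto)
  then show ?thesis
    using card by (simp add: sum_distrib_left[symmetric] sum_divide_distrib[symmetric] field_simps)
qed

locale message_fun =
  fixes \<phi> :: "real \<Rightarrow> real"
  assumes message: "message \<phi>"
begin

abbreviation \<psi> :: "real \<Rightarrow> real" where
  "\<psi> \<equiv> inv_into {0<..} \<phi>"

lemma strict_mono: "strict_mono_on {0<..} \<phi>"
  using message unfolding message_def by blast

lemma has_real_derivative: "x > 0 \<Longrightarrow> (\<phi> has_real_derivative deriv \<phi> x) (at x)"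
  using message unfolding message_def by (simp add: DERIV_deriv_iff_real_differentiable)

lemma deriv_pos: "x > 0 \<Longrightarrow> deriv \<phi> x > 0"
  using message unfolding message_def by (meson greaterThanAtMost_iff less_le_trans order_refl)

lemma continuous_on: "continuous_on {0<..} \<phi>"
  using has_real_derivative
  by (meson DERIV_isCont continuous_at_imp_continuous_on greaterThan_iff)

lemma inv_phi [simp]: "x > 0 \<Longrightarrow> \<psi> (\<phi> x) = x"
  using strict_mono by (simp add: inv_into_f_f strict_mono_on_imp_inj_on)

lemma convex_range: "convex (\<phi> ` {0<..})"
  using connected_continuous_image[OF continuous_on]
  by (simp add: is_interval_convex_1[symmetric] is_interval_connected_1)

lemma inv_has_real_derivative:
  assumes "z \<in> \<phi> ` {0<..}"
  shows "(\<psi> has_real_derivative 1 / deriv \<phi> (\<psi> z)) (at z)"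
proof -
  obtain x where x: "x > 0" "z = \<phi> x" using assms by auto
  have "(\<psi> has_derivative (*) (1 / deriv \<phi> x)) (at (\<phi> x))"
    using \<open>x > 0\<close> has_real_derivative[OF \<open>x > 0\<close>] deriv_pos[OF \<open>x > 0\<close>]
    by (intro has_derivative_inverse_strong[of "{0<..}" x \<phi>])
       (auto simp: continuous_on has_field_derivative_def)
  then show ?thesis using x by (simp add: has_field_derivative_def mult.commute)
qed

definition log_coord :: "real \<Rightarrow> real" where
  "log_coord z = ln (1 + \<psi> z)"

definition log_coord_deriv :: "real \<Rightarrow> real" where
  "log_coord_deriv z = 1 / ((1 + \<psi> z) * deriv \<phi> (\<psi> z))"

lemma log_coord_has_real_derivative:
  assumes "z \<in> \<phi> ` {0<..}"
  shows "(log_coord has_real_derivative log_coord_deriv z) (at z)"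
proof -
  have "\<psi> z > 0" using assms by auto
  have "((\<lambda>z. ln (1 + \<psi> z)) has_real_derivative inverse (1 + \<psi> z) * (0 + 1 / deriv \<phi> (\<psi> z))) (at z)"
    using \<open>\<psi> z > 0\<close>
    by (intro DERIV_chain2[OF DERIV_ln] derivative_intros inv_has_real_derivative assms) simp
  then show ?thesis unfolding log_coord_def[abs_def] log_coord_deriv_def by (simp add: field_simps)
qed

lemma log_coord_pos: "z \<in> \<phi> ` {0<..} \<Longrightarrow> log_coord z > 0"
  by (auto simp: log_coord_def)

lemma log_coord_deriv_pos: "z \<in> \<phi> ` {0<..} \<Longrightarrow> log_coord_deriv z > 0"
  by (auto simp: log_coord_deriv_def deriv_pos)

lemma S_fun_log_coord:
  "z \<in> \<phi> ` {0<..} \<Longrightarrow> S_fun \<phi> p (log_coord z) = log_coord_deriv z powr p"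
  by (auto simp: S_fun_def log_coord_def log_coord_deriv_def exp_minus field_simps)

lemma fphi_eq_log_coord:
  assumes "\<forall>i<d. v i \<in> \<phi> ` {0<..}"
  shows "fphi \<phi> lam d v = \<phi> (lam * exp (- (\<Sum>i<d. log_coord (v i))))"
proof -
  have "(\<Prod>i<d. 1 / (1 + \<psi> (v i))) = exp (- (\<Sum>i<d. log_coord (v i)))"
    unfolding exp_minus exp_sum[OF finite_lessThan] prod_inversef[symmetric]
    using assms by (intro prod.cong) (auto simp: log_coord_def inverse_eq_divide add_pos_pos)
  then show ?thesis unfolding fphi_def fd_def by simp
qed

lemma fphi_mean_value:
  assumes x: "\<forall>i<d. x i \<in> \<phi> ` {0<..}" and y: "\<forall>i<d. y i \<in> \<phi> ` {0<..}" and "lam > 0"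
  obtains z where "\<forall>i<d. z i \<in> \<phi> ` {0<..}"
    and "fphi \<phi> lam d x - fphi \<phi> lam d y =
           - (deriv \<phi> (lam * exp (- (\<Sum>i<d. log_coord (z i)))) * (lam * exp (- (\<Sum>i<d. log_coord (z i))))
              * (\<Sum>i<d. log_coord_deriv (z i) * (x i - y i)))"
proof -
  define z where "z t i = y i + t * (x i - y i)" for t i
  have z_range: "z t i \<in> \<phi> ` {0<..}" if "i < d" "0 \<le> t" "t \<le> 1" for i t
  proof -
    have "(1 - t) *\<^sub>R y i + t *\<^sub>R x i \<in> \<phi> ` {0<..}"
      using convex_range x y that unfolding convex_alt by blast
    then show ?thesis unfolding z_def by (simp add: algebra_simps)
  qed
  define E where "E t = lam * exp (- (\<Sum>i<d. log_coord (z t i)))" for t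
  define g' where "g' t = - (deriv \<phi> (E t) * E t * (\<Sum>i<d. log_coord_deriv (z t i) * (x i - y i)))" for t
  have "E t > 0" for t unfolding E_def using \<open>lam > 0\<close> by simp
  have "((\<lambda>t. \<phi> (E t)) has_real_derivative g' t) (at t)" if "0 \<le> t" "t \<le> 1" for t
  proof -
    have "((\<lambda>t. log_coord (z t i)) has_real_derivative log_coord_deriv (z t i) * (x i - y i)) (at t)"
      if "i < d" for i
      using z_range[OF \<open>i < d\<close> \<open>0 \<le> t\<close> \<open>t \<le> 1\<close>] unfolding z_def
      by (auto intro!: derivative_eq_intros DERIV_chain2[OF log_coord_has_real_derivative])
    then have "(E has_real_derivative E t * - (\<Sum>i<d. log_coord_deriv (z t i) * (x i - y i))) (at t)"
      unfolding E_def[abs_def] by (auto intro!: derivative_eq_intros DERIV_sum)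
    from DERIV_chain2[OF has_real_derivative[OF \<open>E t > 0\<close>] this] show ?thesis
      by (simp add: g'_def mult.assoc)
  qed
  then obtain \<tau> where "0 < \<tau>" "\<tau> < 1" "\<phi> (E 1) - \<phi> (E 0) = (1 - 0) * g' \<tau>"
    using MVT2[of 0 1 "\<lambda>t. \<phi> (E t)" g'] by auto
  moreover have "\<phi> (E 1) = fphi \<phi> lam d x" "\<phi> (E 0) = fphi \<phi> lam d y"
    unfolding E_def z_def using fphi_eq_log_coord x y by simp_all
  ultimately show ?thesis
    using that[of "z \<tau>"] z_range by (auto simp: g'_def E_def)
qed

lemma log_coord_deriv_weighted_sum_le:
  fixes b :: "nat \<Rightarrow> real"
  assumes "d \<ge> 1" and pq: "p > 1" "q > 1" "1 / p + 1 / q = 1"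
    and concave: "concave_on {0<..} (S_fun \<phi> p)"
    and z: "\<forall>i<d. z i \<in> \<phi> ` {0<..}" and b: "\<forall>i<d. b i \<ge> 0"
  obtains x\<^sub>0 where "x\<^sub>0 > 0" "lam * exp (- (\<Sum>i<d. log_coord (z i))) = fd1 lam d x\<^sub>0"
    and "(\<Sum>i<d. log_coord_deriv (z i) * b i)
           \<le> d powr (1 / p) / ((1 + x\<^sub>0) * deriv \<phi> x\<^sub>0) * (\<Sum>i<d. b i powr q) powr (1 / q)"
proof -
  define m where "m = (\<Sum>i<d. log_coord (z i)) / d"
  define x\<^sub>0 where "x\<^sub>0 = exp m - 1"
  have "m > 0"
    unfolding m_def using \<open>d \<ge> 1\<close> z log_coord_pos
    by (intro divide_pos_pos sum_pos) (auto simp: lessThan_empty_iff)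
  then have "x\<^sub>0 > 0" "exp m = 1 + x\<^sub>0" unfolding x\<^sub>0_def by simp_all
  have "(\<Sum>i<d. log_coord (z i)) = d * m" unfolding m_def using \<open>d \<ge> 1\<close> by simp
  then have fd1_eq: "lam * exp (- (\<Sum>i<d. log_coord (z i))) = fd1 lam d x\<^sub>0"
    using \<open>exp m = 1 + x\<^sub>0\<close> by (simp add: fd1_def exp_minus exp_of_nat_mult divide_inverse)
  have "(\<Sum>i<d. log_coord_deriv (z i) powr p) = (\<Sum>i<d. S_fun \<phi> p (log_coord (z i)))"
    using z by (simp add: S_fun_log_coord)
  also have "\<dots> \<le> d * S_fun \<phi> p m"
    using concave_on_sum_le_card_mean[OF concave, of "{..<d}" "\<lambda>i. log_coord (z i)"]
      \<open>d \<ge> 1\<close> z log_coord_pos by (auto simp: m_def lessThan_empty_iff)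
  also have "S_fun \<phi> p m = (1 / ((1 + x\<^sub>0) * deriv \<phi> x\<^sub>0)) powr p"
    using \<open>exp m = 1 + x\<^sub>0\<close> unfolding S_fun_def x\<^sub>0_def[symmetric]
    by (simp add: exp_minus inverse_eq_divide)
  finally have "(\<Sum>i<d. log_coord_deriv (z i) powr p) powr (1 / p)
      \<le> (d * (1 / ((1 + x\<^sub>0) * deriv \<phi> x\<^sub>0)) powr p) powr (1 / p)"
    using pq by (intro powr_mono2) (auto intro: sum_nonneg)
  also have "\<dots> = d powr (1 / p) / ((1 + x\<^sub>0) * deriv \<phi> x\<^sub>0)"
    using pq \<open>x\<^sub>0 > 0\<close> deriv_pos[of x\<^sub>0] by (simp add: powr_mult powr_powr)
  finally have mean_bound: "(\<Sum>i<d. log_coord_deriv (z i) powr p) powr (1 / p)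
      \<le> d powr (1 / p) / ((1 + x\<^sub>0) * deriv \<phi> x\<^sub>0)" .
  have "(\<Sum>i<d. log_coord_deriv (z i) * b i)
      \<le> (\<Sum>i<d. log_coord_deriv (z i) powr p) powr (1 / p) * (\<Sum>i<d. b i powr q) powr (1 / q)"
    using z b pq log_coord_deriv_pos by (intro Holder_inequality_sum) (auto simp: less_imp_le)
  also have "\<dots> \<le> d powr (1 / p) / ((1 + x\<^sub>0) * deriv \<phi> x\<^sub>0) * (\<Sum>i<d. b i powr q) powr (1 / q)"
    using mean_bound by (rule mult_right_mono) simp
  finally show ?thesis using that \<open>x\<^sub>0 > 0\<close> fd1_eq by blast
qed

lemma fphi_diff_powr_le_Xi_fun:
  assumes "lam > 0" "d \<ge> 1" "p > 0" "q > 0" "1 / p + 1 / q = 1"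
    and concave: "concave_on {0<..} (S_fun \<phi> p)"
    and x: "\<forall>i<d. x i \<in> \<phi> ` {0<..}" and y: "\<forall>i<d. y i \<in> \<phi> ` {0<..}"
  obtains x\<^sub>0 where "x\<^sub>0 > 0"
    and "\<bar>fphi \<phi> lam d x - fphi \<phi> lam d y\<bar> powr q
           \<le> Xi_fun \<phi> lam q d x\<^sub>0 * (\<Sum>i<d. \<bar>x i - y i\<bar> powr q)"
proof -
  have "p > 1" "q > 1" using conjugate_exponents_gt_1 assms by blast+
  obtain z where z: "\<forall>i<d. z i \<in> \<phi> ` {0<..}"
    and mvt: "fphi \<phi> lam d x - fphi \<phi> lam d y =
           - (deriv \<phi> (lam * exp (- (\<Sum>i<d. log_coord (z i)))) * (lam * exp (- (\<Sum>i<d. log_coord (z i))))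
              * (\<Sum>i<d. log_coord_deriv (z i) * (x i - y i)))"
    using fphi_mean_value[OF x y \<open>lam > 0\<close>] by blast
  define F where "F = lam * exp (- (\<Sum>i<d. log_coord (z i)))"
  define B where "B = (\<Sum>i<d. \<bar>x i - y i\<bar> powr q)"
  obtain x\<^sub>0 where "x\<^sub>0 > 0" and F: "F = fd1 lam d x\<^sub>0"
    and sum_le: "(\<Sum>i<d. log_coord_deriv (z i) * \<bar>x i - y i\<bar>)
           \<le> d powr (1 / p) / ((1 + x\<^sub>0) * deriv \<phi> x\<^sub>0) * B powr (1 / q)"
    using log_coord_deriv_weighted_sum_le[OF \<open>d \<ge> 1\<close> \<open>p > 1\<close> \<open>q > 1\<close> \<open>1 / p + 1 / q = 1\<close> concave z,
        of "\<lambda>i. \<bar>x i - y i\<bar>" lam]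
    unfolding F_def B_def by auto
  define K where "K = deriv \<phi> F * F / ((1 + x\<^sub>0) * deriv \<phi> x\<^sub>0)"
  have "F > 0" unfolding F_def using \<open>lam > 0\<close> by simp
  then have "deriv \<phi> F * F > 0" using deriv_pos by simp
  then have "K \<ge> 0" unfolding K_def using \<open>x\<^sub>0 > 0\<close> deriv_pos[of x\<^sub>0] by simp
  have "\<bar>fphi \<phi> lam d x - fphi \<phi> lam d y\<bar>
      = deriv \<phi> F * F * \<bar>\<Sum>i<d. log_coord_deriv (z i) * (x i - y i)\<bar>"
    using mvt[folded F_def] abs_of_pos[OF \<open>deriv \<phi> F * F > 0\<close>]
    by (simp only: abs_minus_cancel abs_mult)
  also have "\<dots> \<le> deriv \<phi> F * F * (\<Sum>i<d. log_coord_deriv (z i) * \<bar>x i - y i\<bar>)"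
    using \<open>deriv \<phi> F * F > 0\<close> z log_coord_deriv_pos
    by (intro mult_left_mono order.trans[OF sum_abs] sum_mono) (auto simp: abs_mult less_imp_le)
  also have "\<dots> \<le> deriv \<phi> F * F * (d powr (1 / p) / ((1 + x\<^sub>0) * deriv \<phi> x\<^sub>0) * B powr (1 / q))"
    using \<open>deriv \<phi> F * F > 0\<close> sum_le by (intro mult_left_mono) auto
  also have "\<dots> = K * d powr (1 / p) * B powr (1 / q)" unfolding K_def by simp
  finally have "\<bar>fphi \<phi> lam d x - fphi \<phi> lam d y\<bar> powr q \<le> (K * d powr (1 / p) * B powr (1 / q)) powr q"
    using \<open>q > 0\<close> by (intro powr_mono2) auto
  also have "\<dots> = d powr (q - 1) * K powr q * B"
  proof -
    have "q * (1 / p) = q - 1" using \<open>1 / p + 1 / q = 1\<close> \<open>q > 0\<close> by (simp add: field_simps)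
    moreover have "B \<ge> 0" unfolding B_def by (simp add: sum_nonneg)
    ultimately show ?thesis using \<open>K \<ge> 0\<close> \<open>q > 0\<close> by (simp add: powr_mult powr_powr)
  qed
  also have "\<dots> = Xi_fun \<phi> lam q d x\<^sub>0 * B" unfolding Xi_fun_def K_def F ..
  finally show ?thesis using that \<open>x\<^sub>0 > 0\<close> unfolding B_def by blast
qed

end

theorem lemma3p2:
  fixes \<phi> :: "real \<Rightarrow> real" and lam p q :: real and d :: nat
    and x y :: "nat \<Rightarrow> real"
  assumes "lam > 0" and "d \<ge> 1"
    and "message \<phi>"
    and "p > 0" and "q > 0" and "1 / p + 1 / q = 1"
    and "concave_on {0<..} (S_fun \<phi> p)"
    and "\<forall>i<d. x i \<in> \<phi> ` {0<..}" and "\<forall>i<d. y i \<in> \<phi> ` {0<..}"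
  shows "ereal (\<bar>fphi \<phi> lam d x - fphi \<phi> lam d y\<bar> powr q)
           \<le> xi_fun \<phi> lam q d * ereal (\<Sum>i<d. \<bar>x i - y i\<bar> powr q)"
proof -
  interpret message_fun \<phi> by standard (rule \<open>message \<phi>\<close>)
  obtain x\<^sub>0 where "x\<^sub>0 > 0"
    and bound: "\<bar>fphi \<phi> lam d x - fphi \<phi> lam d y\<bar> powr q
           \<le> Xi_fun \<phi> lam q d x\<^sub>0 * (\<Sum>i<d. \<bar>x i - y i\<bar> powr q)"
    using fphi_diff_powr_le_Xi_fun assms by blast
  have "ereal (\<bar>fphi \<phi> lam d x - fphi \<phi> lam d y\<bar> powr q)
      \<le> ereal (Xi_fun \<phi> lam q d x\<^sub>0) * ereal (\<Sum>i<d. \<bar>x i - y i\<bar> powr q)"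
    using bound by simp
  also have "\<dots> \<le> xi_fun \<phi> lam q d * ereal (\<Sum>i<d. \<bar>x i - y i\<bar> powr q)"
    unfolding xi_fun_def using \<open>x\<^sub>0 > 0\<close>
    by (intro ereal_mult_right_mono SUP_upper) (auto intro: sum_nonneg)
  finally show ?thesis .
qed

end
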